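(* Let $(X,\Sigma)$ be a measurable space and $p$ a transition function on it with associated operator $A$ on $ba(X,\Sigma)$. Suppose the Markov chain has a singular cycle of sets of states $S=\{D_1,\dots,D_m\}$. Then $A$ has a singular cycle of finitely additive measures $K=\{\mu_1,\dots,\mu_m\}\subset S_{ba}$ such that $\mu_i(D_j)=1$ if $i=j$ and $\mu_i(D_j)=0$ if $i\ne j$.
   Context: $X$ is an arbitrary infinite set and $\Sigma$ a $\sigma$-algebra of subsets of $X$ containing all one-point sets. $ba(X,\Sigma)$ denotes the space of bounded finitely additive real-valued measures on $\Sigma$, and $S_{ba}=\{\mu\in ba(X,\Sigma):\mu\ge0,\ \mu(X)=1\}$. A transition function is a map $p(x,E)$ with $0\le p(x,E)\le1$, $p(x,X)=1$, $p(\cdot,E)$ bounded $\Sigma$-measurable for every $E\in\Sigma$, and $p(x,\cdot)$ countably additive for every $x\in X$. The Markov operator is $A\mu(E)=\int_X p(x,E)\,\mu(dx)$. A cycle of measures of $A$ is a finite numbered set $\{\mu_1,\dots,\mu_m\}$ of pairwise different positive finitely additive measures with $A\mu_i=\mu_{i+1}$ ($1\le i\le m-1$), $A\mu_m=\mu_1$; it is singular if its measures are pairwise singular, where positive $\mu,\nu$ are singular if there are disjoint $D,D'\in\Sigma$ with $\mu(D)=\mu(X)$, $\nu(D')=\nu(X)$. A cycle of sets of states is a system of pairwise distinct sets $D_1,\dots,D_m\in\Sigma$ with $p(x,D_{i+1})=1$ for all $x\in D_i$ ($1\le i\le m-1$) and $p(x,D_1)=1$ for all $x\in D_m$; it is singular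 if $D_i\cap D_j=\emptyset$ for $i\ne j$. *)

theory Defs
  imports "HOL-Analysis.Analysis"
begin

definition standing_space :: "'a set \<Rightarrow> 'a set set \<Rightarrow> bool" where
  "standing_space X \<Sigma> \<longleftrightarrow> sigma_algebra X \<Sigma> \<and> infinite X \<and> (\<forall>x\<in>X. {x} \<in> \<Sigma>)"

text \<open>Bounded finitely additive real-valued measures on \<Sigma> (the space ba(X,\<Sigma>)).
  Only the values on \<Sigma> are relevant.\<close>
definition is_ba :: "'a set set \<Rightarrow> ('a set \<Rightarrow> real) \<Rightarrow> bool" where
  "is_ba \<Sigma> \<mu> \<longleftrightarrow>
     (\<forall>A\<in>\<Sigma>. \<forall>B\<in>\<Sigma>. A \<inter> B = {} \<longrightarrow> \<mu> (A \<union> B) = \<mu> A + \<mu> B) \<and>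
     (\<exists>c. \<forall>A\<in>\<Sigma>. \<bar>\<mu> A\<bar> \<le> c)"

definition positive_fa :: "'a set set \<Rightarrow> ('a set \<Rightarrow> real) \<Rightarrow> bool" where
  "positive_fa \<Sigma> \<mu> \<longleftrightarrow> (\<forall>A\<in>\<Sigma>. 0 \<le> \<mu> A)"

definition S_ba :: "'a set \<Rightarrow> 'a set set \<Rightarrow> ('a set \<Rightarrow> real) set" where
  "S_ba X \<Sigma> = {\<mu>. is_ba \<Sigma> \<mu> \<and> positive_fa \<Sigma> \<mu> \<and> \<mu> X = 1}"

definition meas_eq :: "'a set set \<Rightarrow> ('a set \<Rightarrow> real) \<Rightarrow> ('a set \<Rightarrow> real) \<Rightarrow> bool" where
  "meas_eq \<Sigma> \<mu> \<nu> \<longleftrightarrow> (\<forall>E\<in>\<Sigma>. \<mu> E = \<nu> E)"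

definition transition_function ::
  "'a set \<Rightarrow> 'a set set \<Rightarrow> ('a \<Rightarrow> 'a set \<Rightarrow> real) \<Rightarrow> bool" where
  "transition_function X \<Sigma> p \<longleftrightarrow>
     (\<forall>x\<in>X. \<forall>E\<in>\<Sigma>. 0 \<le> p x E \<and> p x E \<le> 1) \<and>
     (\<forall>x\<in>X. p x X = 1) \<and>
     (\<forall>E\<in>\<Sigma>. \<forall>c::real. {x\<in>X. p x E \<le> c} \<in> \<Sigma>) \<and>
     (\<forall>x\<in>X. \<forall>F::nat \<Rightarrow> 'a set. range F \<subseteq> \<Sigma> \<longrightarrow> disjoint_family F \<longrightarrow>
              (\<lambda>n. p x (F n)) sums p x (\<Union>n. F n))"

text \<open>Integral of a bounded \<Sigma>-measurable function with respect to a bounded finitely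
  additive measure: limit of the integrals of the simple functions
  floor((n+1) f)/(n+1), which converge uniformly to f.\<close>
definition fa_integral ::
  "'a set \<Rightarrow> ('a set \<Rightarrow> real) \<Rightarrow> ('a \<Rightarrow> real) \<Rightarrow> real" where
  "fa_integral X \<mu> f =
     lim (\<lambda>n. \<Sum>k\<in>(\<lambda>x. \<lfloor>real (Suc n) * f x\<rfloor>) ` X.
                 (real_of_int k / real (Suc n)) * \<mu> {x\<in>X. \<lfloor>real (Suc n) * f x\<rfloor> = k})"

definition markov_op ::
  "'a set \<Rightarrow> ('a \<Rightarrow> 'a set \<Rightarrow> real) \<Rightarrow> ('a set \<Rightarrow> real) \<Rightarrow> ('a set \<Rightarrow> real)" where
  "markov_op X p \<mu> = (\<lambda>E. fa_integral X \<mu> (\<lambda>x. p x E))"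

definition singular_meas ::
  "'a set \<Rightarrow> 'a set set \<Rightarrow> ('a set \<Rightarrow> real) \<Rightarrow> ('a set \<Rightarrow> real) \<Rightarrow> bool" where
  "singular_meas X \<Sigma> \<mu> \<nu> \<longleftrightarrow>
     (\<exists>D\<in>\<Sigma>. \<exists>D'\<in>\<Sigma>. D \<inter> D' = {} \<and> \<mu> D = \<mu> X \<and> \<nu> D' = \<nu> X)"

text \<open>A cycle of measures \<mu> 0, ..., \<mu> (m-1) (indices shifted to start at 0);
  successor of index i is (i+1) mod m.\<close>
definition cycle_measures ::
  "'a set \<Rightarrow> 'a set set \<Rightarrow> ('a \<Rightarrow> 'a set \<Rightarrow> real) \<Rightarrow> nat \<Rightarrow> (nat \<Rightarrow> 'a set \<Rightarrow> real) \<Rightarrow> bool" where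
  "cycle_measures X \<Sigma> p m \<mu> \<longleftrightarrow> m \<ge> 1 \<and>
     (\<forall>i<m. is_ba \<Sigma> (\<mu> i) \<and> positive_fa \<Sigma> (\<mu> i)) \<and>
     (\<forall>i<m. \<forall>j<m. i \<noteq> j \<longrightarrow> \<not> meas_eq \<Sigma> (\<mu> i) (\<mu> j)) \<and>
     (\<forall>i<m. meas_eq \<Sigma> (markov_op X p (\<mu> i)) (\<mu> ((i + 1) mod m)))"

definition singular_cycle_measures ::
  "'a set \<Rightarrow> 'a set set \<Rightarrow> ('a \<Rightarrow> 'a set \<Rightarrow> real) \<Rightarrow> nat \<Rightarrow> (nat \<Rightarrow> 'a set \<Rightarrow> real) \<Rightarrow> bool" where
  "singular_cycle_measures X \<Sigma> p m \<mu> \<longleftrightarrow> cycle_measures X \<Sigma> p m \<mu> \<and>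
     (\<forall>i<m. \<forall>j<m. i \<noteq> j \<longrightarrow> singular_meas X \<Sigma> (\<mu> i) (\<mu> j))"

text \<open>A cycle of sets of states D 0, ..., D (m-1) (indices shifted to start at 0).
  The sets of states are taken to be nonempty.\<close>
definition cycle_sets ::
  "'a set set \<Rightarrow> ('a \<Rightarrow> 'a set \<Rightarrow> real) \<Rightarrow> nat \<Rightarrow> (nat \<Rightarrow> 'a set) \<Rightarrow> bool" where
  "cycle_sets \<Sigma> p m D \<longleftrightarrow> m \<ge> 1 \<and>
     (\<forall>i<m. D i \<in> \<Sigma> \<and> D i \<noteq> {}) \<and>
     (\<forall>i<m. \<forall>j<m. i \<noteq> j \<longrightarrow> D i \<noteq> D j) \<and>
     (\<forall>i<m. \<forall>x\<in>D i. p x (D ((i + 1) mod m)) = 1)"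

definition singular_cycle_sets ::
  "'a set set \<Rightarrow> ('a \<Rightarrow> 'a set \<Rightarrow> real) \<Rightarrow> nat \<Rightarrow> (nat \<Rightarrow> 'a set) \<Rightarrow> bool" where
  "singular_cycle_sets \<Sigma> p m D \<longleftrightarrow> cycle_sets \<Sigma> p m D \<and>
     (\<forall>i<m. \<forall>j<m. i \<noteq> j \<longrightarrow> D i \<inter> D j = {})"

end

theory Submission
  imports Defs
begin

text \<open>Start the chain at a point \<open>x \<in> D 0\<close>: the orbit \<open>A\<^sup>j \<delta>\<^sub>x\<close> of the Dirac measure is concentrated
  on \<open>D (j mod m)\<close>. For each \<open>i < m\<close> let \<open>\<mu> i\<close> be the setwise limit, along one free ultrafilter
  on \<open>\<nat>\<close>, of the Cesaro means of \<open>A\<^sup>k\<^sup>m\<^sup>+\<^sup>i \<delta>\<^sub>x\<close>; these limits exist because all values lie in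
  the compact interval [0,1], and they are again finitely additive probabilities. \<open>A\<close> commutes with
  such limits, since the integral is a uniform limit of level sums, each of which depends on
  finitely many values of the measure. Hence \<open>A (\<mu> i)\<close> is the limit of the means of
  \<open>A\<^sup>k\<^sup>m\<^sup>+\<^sup>i\<^sup>+\<^sup>1 \<delta>\<^sub>x\<close>, which is \<open>\<mu> (i + 1)\<close>; for \<open>i = m - 1\<close> the averaged sequence is shifted by one
  term, which averaging makes negligible. Finally \<open>\<mu> i (D j)\<close> inherits the constant value \<open>[i = j]\<close>
  of the averaged sequence.\<close>

section \<open>Ultrafilters\<close>

definition ultrafilter :: "'b filter \<Rightarrow> bool" where
  "ultrafilter U \<longleftrightarrow> U \<noteq> bot \<and> (\<forall>P. eventually P U \<or> eventually (\<lambda>x. \<not> P x) U)"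

lemma ultrafilterI_maximal:
  assumes "U \<noteq> bot" and maximal: "\<And>G. G \<noteq> bot \<Longrightarrow> G \<le> U \<Longrightarrow> G = U"
  shows "ultrafilter U"
proof -
  have "eventually P U \<or> eventually (\<lambda>x. \<not> P x) U" for P
  proof (rule disjCI)
    assume "\<not> eventually (\<lambda>x. \<not> P x) U"
    then have "inf U (principal {x. P x}) \<noteq> bot"
      by (simp add: trivial_limit_def eventually_inf_principal)
    then have "inf U (principal {x. P x}) = U"
      using maximal by simp
    moreover have "eventually P (inf U (principal {x. P x}))"
      by (simp add: eventually_inf_principal)
    ultimately show "eventually P U" by simp
  qed
  then show ?thesis using assms(1) by (simp add: ultrafilter_def)
qed

lemma exists_ultrafilter_le:
  fixes F :: "'b filter"
  assumes "F \<noteq> bot"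
  shows "\<exists>U \<le> F. ultrafilter U"
proof -
  define R where "R = {(G, H). H \<noteq> bot \<and> H \<le> G \<and> G \<le> F}"
  have Field_R: "Field R = {G. G \<noteq> bot \<and> G \<le> F}"
    by (auto simp: Field_def R_def bot_unique)
  have "\<exists>U\<in>Field R. \<forall>G\<in>Field R. (U, G) \<in> R \<longrightarrow> G = U"
  proof (rule Zorns_po_lemma)
    show "Partial_order R"
      by (auto simp: R_def partial_order_on_def preorder_on_def
          antisym_def refl_on_def trans_def Field_def bot_unique)
    show "\<exists>U\<in>Field R. \<forall>G\<in>C. (G, U) \<in> R" if C: "C \<in> Chains R" for C
    proof (cases "C = {}")
      case True
      then show ?thesis using assms by (auto simp: Field_R)
    next
      case False
      have "bot \<notin> C" using C by (auto simp: Chains_def R_def)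
      moreover have "Inf C = bot \<longleftrightarrow> (\<exists>G\<in>C. G = bot)"
        unfolding trivial_limit_def using C False
        by (intro eventually_Inf_base) (auto simp: Chains_def R_def)
      ultimately have "Inf C \<noteq> bot" by auto
      moreover from False obtain G where "G \<in> C" by auto
      with C have "Inf C \<le> F"
        by (auto intro!: Inf_lower2[of G] simp: Chains_def R_def)
      ultimately have "Inf C \<in> Field R" "\<forall>G\<in>C. (G, Inf C) \<in> R"
        using C \<open>bot \<notin> C\<close> by (simp add: Field_R, auto simp: R_def Chains_def Inf_lower)
      then show ?thesis by blast
    qed
  qed
  then obtain U where "U \<noteq> bot" "U \<le> F" "\<And>G. G \<noteq> bot \<Longrightarrow> G \<le> U \<Longrightarrow> G = U"
    unfolding Field_R by (auto simp: R_def)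
  then show ?thesis
    using ultrafilterI_maximal by blast
qed

lemma ultrafilter_tendsto_compact:
  fixes a :: "'b \<Rightarrow> 'c::topological_space"
  assumes U: "ultrafilter U" and "compact K" and "eventually (\<lambda>x. a x \<in> K) U"
  shows "\<exists>L\<in>K. (a \<longlongrightarrow> L) U"
proof -
  have "filtermap a U \<noteq> bot"
    using U by (simp add: ultrafilter_def filtermap_bot_iff)
  moreover have "eventually (\<lambda>y. y \<in> K) (filtermap a U)"
    using assms(3) by (simp add: eventually_filtermap)
  ultimately obtain L where "L \<in> K" and L: "inf (nhds L) (filtermap a U) \<noteq> bot"
    using \<open>compact K\<close> unfolding compact_filter by blast
  have "eventually (\<lambda>x. a x \<in> S) U" if "open S" "L \<in> S" for S
  proof (rule ccontr)
    assume "\<not> eventually (\<lambda>x. a x \<in> S) U"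
    then have "eventually (\<lambda>y. y \<notin> S) (filtermap a U)"
      using U by (auto simp: ultrafilter_def eventually_filtermap)
    moreover have "eventually (\<lambda>y. y \<in> S) (nhds L)"
      using that eventually_nhds by blast
    ultimately have "eventually (\<lambda>y. False) (inf (nhds L) (filtermap a U))"
      using eventually_inf by blast
    then show False using L by (simp add: trivial_limit_def)
  qed
  then show ?thesis using \<open>L \<in> K\<close> by (blast intro: topological_tendstoI)
qed

section \<open>Cesaro means\<close>

definition cesaro_mean :: "(nat \<Rightarrow> real) \<Rightarrow> nat \<Rightarrow> real" where
  "cesaro_mean g n = (\<Sum>k\<le>n. g k) / real (Suc n)"

lemma cesaro_mean_const: "cesaro_mean (\<lambda>_. c) n = c"
  by (simp add: cesaro_mean_def)

lemma tendsto_cesaro_mean_shift: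
  assumes "\<And>k. \<bar>g k\<bar> \<le> c" "F \<le> sequentially" "(cesaro_mean g \<longlongrightarrow> L) F"
  shows "((\<lambda>n. cesaro_mean (\<lambda>k. g (Suc k)) n) \<longlongrightarrow> L) F"
proof -
  have "cesaro_mean (\<lambda>k. g (Suc k)) n - cesaro_mean g n = (\<Sum>k<Suc n. g (Suc k) - g k) / real (Suc n)" for n
    by (simp only: cesaro_mean_def lessThan_Suc_atMost sum_subtractf diff_divide_distrib)
  then have shift: "cesaro_mean (\<lambda>k. g (Suc k)) n - cesaro_mean g n = (g (Suc n) - g 0) / real (Suc n)" for n
    by (simp only: sum_lessThan_telescope)
  have "(\<lambda>n. cesaro_mean (\<lambda>k. g (Suc k)) n - cesaro_mean g n) \<longlonglongrightarrow> 0"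
  proof (rule Lim_null_comparison)
    have "\<bar>g (Suc n) - g 0\<bar> \<le> 2 * c" for n
      using assms(1)[of "Suc n"] assms(1)[of 0] by linarith
    then show "\<forall>\<^sub>F n in sequentially.
        norm (cesaro_mean (\<lambda>k. g (Suc k)) n - cesaro_mean g n) \<le> 2 * c * inverse (real (Suc n))"
      by (auto simp: shift divide_inverse abs_mult intro!: mult_right_mono)
    show "(\<lambda>n. 2 * c * inverse (real (Suc n))) \<longlonglongrightarrow> 0"
      using tendsto_mult_left[OF LIMSEQ_inverse_real_of_nat, of "2 * c"] by simp
  qed
  from tendsto_add[OF tendsto_mono[OF assms(2) this] assms(3)] show ?thesis
    by simp
qed

section \<open>Finitely additive probabilities\<close>

lemma S_ba_additive:
  "\<nu> \<in> S_ba X \<Sigma> \<Longrightarrow> A \<in> \<Sigma> \<Longrightarrow> B \<in> \<Sigma> \<Longrightarrow> A \<inter> B = {} \<Longrightarrow> \<nu> (A \<union> B) = \<nu> A + \<nu> B"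
  by (simp add: S_ba_def is_ba_def)

lemma S_ba_nonneg: "\<nu> \<in> S_ba X \<Sigma> \<Longrightarrow> A \<in> \<Sigma> \<Longrightarrow> 0 \<le> \<nu> A"
  by (simp add: S_ba_def positive_fa_def)

lemma S_ba_space: "\<nu> \<in> S_ba X \<Sigma> \<Longrightarrow> \<nu> X = 1"
  by (simp add: S_ba_def)

lemma S_baI:
  assumes "algebra X \<Sigma>"
    and additive: "\<And>A B. A \<in> \<Sigma> \<Longrightarrow> B \<in> \<Sigma> \<Longrightarrow> A \<inter> B = {} \<Longrightarrow> \<nu> (A \<union> B) = \<nu> A + \<nu> B"
    and nonneg: "\<And>A. A \<in> \<Sigma> \<Longrightarrow> 0 \<le> \<nu> A"
    and "\<nu> X = 1"
  shows "\<nu> \<in> S_ba X \<Sigma>"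
proof -
  interpret algebra X \<Sigma> by fact
  have "\<bar>\<nu> A\<bar> \<le> 1" if "A \<in> \<Sigma>" for A
  proof -
    have "\<nu> X = \<nu> A + \<nu> (X - A)"
      using that additive[of A "X - A"] sets_into_space by (simp add: Un_absorb1 compl_sets)
    then show ?thesis using that nonneg[of A] nonneg[of "X - A"] \<open>\<nu> X = 1\<close> by (simp add: compl_sets)
  qed
  then show ?thesis
    using assms by (auto simp: S_ba_def is_ba_def positive_fa_def)
qed

lemma S_ba_dirac: "x \<in> X \<Longrightarrow> (\<lambda>E. if x \<in> E then 1 else 0) \<in> S_ba X \<Sigma>"
  by (auto simp: S_ba_def is_ba_def positive_fa_def intro: exI[of _ 1])

definition finite_partition :: "'a set set \<Rightarrow> 'a set \<Rightarrow> 'b set \<Rightarrow> ('b \<Rightarrow> 'a set) \<Rightarrow> bool" where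
  "finite_partition \<Sigma> X K B \<longleftrightarrow>
     finite K \<and> (\<forall>k\<in>K. B k \<in> \<Sigma>) \<and> disjoint_family_on B K \<and> (\<Union>k\<in>K. B k) = X"

context algebra
begin

lemma S_ba_empty: "\<nu> \<in> S_ba \<Omega> M \<Longrightarrow> \<nu> {} = 0"
  using S_ba_additive[of \<nu> \<Omega> M "{}" "{}"] by simp

lemma S_ba_diff:
  "\<nu> \<in> S_ba \<Omega> M \<Longrightarrow> A \<in> M \<Longrightarrow> B \<in> M \<Longrightarrow> A \<subseteq> B \<Longrightarrow> \<nu> (B - A) = \<nu> B - \<nu> A"
  using S_ba_additive[of \<nu> \<Omega> M A "B - A"] by (simp add: Un_absorb1 Diff)

lemma S_ba_mono: "\<nu> \<in> S_ba \<Omega> M \<Longrightarrow> A \<in> M \<Longrightarrow> B \<in> M \<Longrightarrow> A \<subseteq> B \<Longrightarrow> \<nu> A \<le> \<nu> B"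
  using S_ba_diff[of \<nu> A B] S_ba_nonneg[of \<nu> \<Omega> M "B - A"] by (simp add: Diff)

lemma S_ba_le_1: "\<nu> \<in> S_ba \<Omega> M \<Longrightarrow> A \<in> M \<Longrightarrow> \<nu> A \<le> 1"
  using S_ba_mono[of \<nu> A \<Omega>] sets_into_space S_ba_space[of \<nu>] by simp

lemma S_ba_finite_UN:
  assumes "\<nu> \<in> S_ba \<Omega> M" "finite K" "\<And>k. k \<in> K \<Longrightarrow> C k \<in> M" "disjoint_family_on C K"
  shows "\<nu> (\<Union>k\<in>K. C k) = (\<Sum>k\<in>K. \<nu> (C k))"
  using assms(2-4)
proof (induction K rule: finite_induct)
  case empty
  then show ?case using S_ba_empty[OF assms(1)] by simp
next
  case (insert k K)
  have "C k \<inter> (\<Union>k\<in>K. C k) = {}"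
    using insert.hyps(2) insert.prems(2) by (auto simp: disjoint_family_on_def)
  then have "\<nu> (\<Union>k\<in>insert k K. C k) = \<nu> (C k) + \<nu> (\<Union>k\<in>K. C k)"
    using insert by (simp add: S_ba_additive[OF assms(1)] finite_UN)
  then show ?case
    using insert by (simp add: disjoint_family_on_def)
qed

lemma S_ba_disjoint_eq_0:
  assumes "\<nu> \<in> S_ba \<Omega> M" "A \<in> M" "B \<in> M" "A \<inter> B = {}" "\<nu> A = 1"
  shows "\<nu> B = 0"
  using S_ba_additive[OF assms(1-4)] S_ba_le_1[OF assms(1), of "A \<union> B"] S_ba_nonneg[OF assms(1,3)] assms
  by auto

lemma finite_partition_Times:
  assumes "finite_partition M \<Omega> K B" "finite_partition M \<Omega> K' B'"
  shows "finite_partition M \<Omega> (K \<times> K') (\<lambda>(k, l). B k \<inter> B' l)"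
proof -
  have "disjoint_family_on (\<lambda>(k, l). B k \<inter> B' l) (K \<times> K')"
    using assms unfolding finite_partition_def disjoint_family_on_def by fast
  moreover have "(\<Union>(k, l)\<in>K \<times> K'. B k \<inter> B' l) = \<Omega>"
    using assms unfolding finite_partition_def by blast
  ultimately show ?thesis
    using assms by (auto simp: finite_partition_def)
qed

lemma S_ba_partition_split:
  assumes "\<nu> \<in> S_ba \<Omega> M" "finite_partition M \<Omega> K B" "A \<in> M"
  shows "\<nu> A = (\<Sum>l\<in>K. \<nu> (A \<inter> B l))"
proof -
  have "A = (\<Union>l\<in>K. A \<inter> B l)"
    using assms(2,3) sets_into_space unfolding finite_partition_def by auto
  also have "\<nu> \<dots> = (\<Sum>l\<in>K. \<nu> (A \<inter> B l))"
    using assms unfolding finite_partition_def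
    by (intro S_ba_finite_UN) (auto simp: disjoint_family_on_def)
  finally show ?thesis .
qed

lemma S_ba_partition_sum:
  assumes "\<nu> \<in> S_ba \<Omega> M" "finite_partition M \<Omega> K B"
  shows "(\<Sum>l\<in>K. \<nu> (B l)) = 1"
proof -
  have "B l \<subseteq> \<Omega>" if "l \<in> K" for l
    using assms(2) that unfolding finite_partition_def by blast
  then show ?thesis
    using S_ba_partition_split[OF assms top] S_ba_space[OF assms(1)] by (simp add: Int_absorb1)
qed

lemma S_ba_partition_Times_sum:
  assumes \<nu>: "\<nu> \<in> S_ba \<Omega> M" and B: "finite_partition M \<Omega> K B" and B': "finite_partition M \<Omega> K' B'"
  shows "(\<Sum>(k, l)\<in>K \<times> K'. (a k + b l) * \<nu> (B k \<inter> B' l)) =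
    (\<Sum>k\<in>K. a k * \<nu> (B k)) + (\<Sum>l\<in>K'. b l * \<nu> (B' l))"
proof -
  have "B k \<in> M" if "k \<in> K" for k
    using B that unfolding finite_partition_def by auto
  then have rows: "(\<Sum>k\<in>K. \<Sum>l\<in>K'. a k * \<nu> (B k \<inter> B' l)) = (\<Sum>k\<in>K. a k * \<nu> (B k))"
    by (intro sum.cong refl) (simp add: S_ba_partition_split[OF \<nu> B'] sum_distrib_left)
  have "B' l \<in> M" if "l \<in> K'" for l
    using B' that unfolding finite_partition_def by auto
  then have columns: "(\<Sum>l\<in>K'. \<Sum>k\<in>K. b l * \<nu> (B k \<inter> B' l)) = (\<Sum>l\<in>K'. b l * \<nu> (B' l))"
    by (intro sum.cong refl) (simp add: S_ba_partition_split[OF \<nu> B] sum_distrib_left Int_commute)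
  have "(\<Sum>(k, l)\<in>K \<times> K'. (a k + b l) * \<nu> (B k \<inter> B' l)) =
      (\<Sum>k\<in>K. \<Sum>l\<in>K'. a k * \<nu> (B k \<inter> B' l)) + (\<Sum>k\<in>K. \<Sum>l\<in>K'. b l * \<nu> (B k \<inter> B' l))"
    by (simp add: sum.cartesian_product[symmetric] distrib_right sum.distrib)
  also have "(\<Sum>k\<in>K. \<Sum>l\<in>K'. b l * \<nu> (B k \<inter> B' l)) = (\<Sum>l\<in>K'. b l * \<nu> (B' l))"
    by (subst sum.swap) (rule columns)
  finally show ?thesis
    using rows by simp
qed

lemma partition_sum_le:
  assumes \<nu>: "\<nu> \<in> S_ba \<Omega> M"
    and B: "finite_partition M \<Omega> K B" and B': "finite_partition M \<Omega> K' B'"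
    and lower: "\<And>k x. k \<in> K \<Longrightarrow> x \<in> B k \<Longrightarrow> a k \<le> f x"
    and upper: "\<And>l x. l \<in> K' \<Longrightarrow> x \<in> B' l \<Longrightarrow> f x \<le> b l + \<delta>"
  shows "(\<Sum>k\<in>K. a k * \<nu> (B k)) \<le> (\<Sum>l\<in>K'. b l * \<nu> (B' l)) + \<delta>"
proof -
  have sets: "B k \<in> M" "B' l \<in> M" if "k \<in> K" "l \<in> K'" for k l
    using B B' that unfolding finite_partition_def by auto
  have "(\<Sum>k\<in>K. a k * \<nu> (B k)) = (\<Sum>(k, l)\<in>K \<times> K'. (a k + 0) * \<nu> (B k \<inter> B' l))"
    using S_ba_partition_Times_sum[OF \<nu> B B', of a "\<lambda>_. 0"] by simp
  also have "\<dots> \<le> (\<Sum>(k, l)\<in>K \<times> K'. (0 + (b l + \<delta>)) * \<nu> (B k \<inter> B' l))"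
  proof (intro sum_mono, clarify)
    fix k l assume kl: "k \<in> K" "l \<in> K'"
    have "0 \<le> \<nu> (B k \<inter> B' l)"
      using S_ba_nonneg[OF \<nu>] sets[OF kl] by blast
    moreover have "a k \<le> b l + \<delta> \<or> B k \<inter> B' l = {}"
      using lower[OF kl(1)] upper[OF kl(2)] by force
    ultimately show "(a k + 0) * \<nu> (B k \<inter> B' l) \<le> (0 + (b l + \<delta>)) * \<nu> (B k \<inter> B' l)"
      using S_ba_empty[OF \<nu>] by (auto intro: mult_right_mono)
  qed
  also have "\<dots> = (\<Sum>l\<in>K'. b l * \<nu> (B' l)) + \<delta>"
    using S_ba_partition_Times_sum[OF \<nu> B B', of "\<lambda>_. 0" "\<lambda>l. b l + \<delta>"]
    by (simp add: distrib_right sum.distrib S_ba_partition_sum[OF \<nu> B'] sum_distrib_left[symmetric])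
  finally show ?thesis .
qed

lemma S_ba_cesaro_mean:
  assumes "\<And>k. \<nu> k \<in> S_ba \<Omega> M"
  shows "(\<lambda>E. cesaro_mean (\<lambda>k. \<nu> k E) n) \<in> S_ba \<Omega> M"
proof (rule S_baI[OF algebra_axioms])
  show "cesaro_mean (\<lambda>k. \<nu> k (A \<union> B)) n = cesaro_mean (\<lambda>k. \<nu> k A) n + cesaro_mean (\<lambda>k. \<nu> k B) n"
    if "A \<in> M" "B \<in> M" "A \<inter> B = {}" for A B
    using S_ba_additive[OF assms that]
    by (simp add: cesaro_mean_def sum.distrib add_divide_distrib)
  show "0 \<le> cesaro_mean (\<lambda>k. \<nu> k A) n" if "A \<in> M" for A
    using S_ba_nonneg[OF assms that] by (simp add: cesaro_mean_def sum_nonneg)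
  show "cesaro_mean (\<lambda>k. \<nu> k \<Omega>) n = 1"
    using S_ba_space[OF assms] by (simp add: cesaro_mean_const)
qed

lemma S_ba_tendsto:
  fixes \<nu> :: "'b \<Rightarrow> 'a set \<Rightarrow> real"
  assumes "F \<noteq> bot" "\<And>n. \<nu> n \<in> S_ba \<Omega> M"
    and lim: "\<And>E. E \<in> M \<Longrightarrow> ((\<lambda>n. \<nu> n E) \<longlongrightarrow> \<mu> E) F"
  shows "\<mu> \<in> S_ba \<Omega> M"
proof (rule S_baI[OF algebra_axioms])
  show "\<mu> (A \<union> B) = \<mu> A + \<mu> B" if "A \<in> M" "B \<in> M" "A \<inter> B = {}" for A B
  proof (rule tendsto_unique[OF \<open>F \<noteq> bot\<close> lim])
    show "A \<union> B \<in> M" using that by blast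
    show "((\<lambda>n. \<nu> n (A \<union> B)) \<longlongrightarrow> \<mu> A + \<mu> B) F"
      using tendsto_add[OF lim lim, OF that(1,2)] S_ba_additive[OF assms(2) that] by simp
  qed
  show "0 \<le> \<mu> A" if "A \<in> M" for A
    using tendsto_lowerbound[OF lim[OF that] _ \<open>F \<noteq> bot\<close>] S_ba_nonneg[OF assms(2) that] by simp
  show "\<mu> \<Omega> = 1"
    using tendsto_unique[OF \<open>F \<noteq> bot\<close> lim[OF top]] S_ba_space[OF assms(2)] by simp
qed

lemma ultrafilter_limit_S_ba:
  fixes \<nu> :: "'b \<Rightarrow> 'a set \<Rightarrow> real"
  assumes "ultrafilter U" "\<And>n. \<nu> n \<in> S_ba \<Omega> M"
  shows "\<exists>\<mu>\<in>S_ba \<Omega> M. \<forall>E\<in>M. ((\<lambda>n. \<nu> n E) \<longlongrightarrow> \<mu> E) U"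
proof -
  have "\<forall>E\<in>M. \<exists>L. ((\<lambda>n. \<nu> n E) \<longlongrightarrow> L) U"
  proof
    fix E assume "E \<in> M"
    then have "\<forall>\<^sub>F n in U. \<nu> n E \<in> {0..1}"
      using S_ba_nonneg[OF assms(2)] S_ba_le_1[OF assms(2)] by simp
    from ultrafilter_tendsto_compact[OF assms(1) compact_Icc this]
    show "\<exists>L. ((\<lambda>n. \<nu> n E) \<longlongrightarrow> L) U" by blast
  qed
  from bchoice[OF this] obtain \<mu> where \<mu>: "\<forall>E\<in>M. ((\<lambda>n. \<nu> n E) \<longlongrightarrow> \<mu> E) U"
    by blast
  have "U \<noteq> bot"
    using assms(1) by (simp add: ultrafilter_def)
  with \<mu> have "\<mu> \<in> S_ba \<Omega> M"
    using S_ba_tendsto[where F = U and \<mu> = \<mu> and \<nu> = \<nu>, OF _ assms(2)] by simp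
  with \<mu> show ?thesis by blast
qed

lemma exists_ultrafilter_limits_S_ba:
  fixes \<nu> :: "'i \<Rightarrow> nat \<Rightarrow> 'a set \<Rightarrow> real"
  assumes "\<And>i n. \<nu> i n \<in> S_ba \<Omega> M"
  shows "\<exists>U \<le> sequentially. U \<noteq> bot \<and>
    (\<exists>\<mu>. \<forall>i. \<mu> i \<in> S_ba \<Omega> M \<and> (\<forall>E\<in>M. ((\<lambda>n. \<nu> i n E) \<longlongrightarrow> \<mu> i E) U))"
proof -
  obtain U :: "nat filter" where "U \<le> sequentially" "ultrafilter U"
    using exists_ultrafilter_le[of sequentially] by auto
  moreover have "\<forall>i. \<exists>\<mu>\<in>S_ba \<Omega> M. \<forall>E\<in>M. ((\<lambda>n. \<nu> i n E) \<longlongrightarrow> \<mu> E) U"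
    using ultrafilter_limit_S_ba[where \<nu> = "\<nu> _", OF \<open>ultrafilter U\<close> assms] by blast
  then have "\<exists>\<mu>. \<forall>i. \<mu> i \<in> S_ba \<Omega> M \<and> (\<forall>E\<in>M. ((\<lambda>n. \<nu> i n E) \<longlongrightarrow> \<mu> i E) U)"
    by (metis choice)
  ultimately show ?thesis
    by (auto simp: ultrafilter_def)
qed

end

section \<open>The finitely additive integral\<close>

definition bounded_measurable :: "'a set set \<Rightarrow> 'a set \<Rightarrow> ('a \<Rightarrow> real) \<Rightarrow> bool" where
  "bounded_measurable \<Sigma> X f \<longleftrightarrow> (\<forall>c. {x\<in>X. f x \<le> c} \<in> \<Sigma>) \<and> (\<exists>c. \<forall>x\<in>X. \<bar>f x\<bar> \<le> c)"

definition level_values :: "'a set \<Rightarrow> ('a \<Rightarrow> real) \<Rightarrow> nat \<Rightarrow> int set" where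
  "level_values X f N = (\<lambda>x. \<lfloor>real (Suc N) * f x\<rfloor>) ` X"

definition level_set :: "'a set \<Rightarrow> ('a \<Rightarrow> real) \<Rightarrow> nat \<Rightarrow> int \<Rightarrow> 'a set" where
  "level_set X f N k = {x\<in>X. \<lfloor>real (Suc N) * f x\<rfloor> = k}"

definition level_sum :: "'a set \<Rightarrow> ('a set \<Rightarrow> real) \<Rightarrow> ('a \<Rightarrow> real) \<Rightarrow> nat \<Rightarrow> real" where
  "level_sum X \<nu> f N =
     (\<Sum>k\<in>level_values X f N. (real_of_int k / real (Suc N)) * \<nu> (level_set X f N k))"

lemma fa_integral_eq_lim_level_sum: "fa_integral X \<nu> f = lim (level_sum X \<nu> f)"
  unfolding fa_integral_def level_sum_def level_values_def level_set_def by simp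

lemma finite_level_values:
  assumes "bounded_measurable \<Sigma> X f"
  shows "finite (level_values X f N)"
proof -
  obtain c where c: "\<And>x. x \<in> X \<Longrightarrow> \<bar>f x\<bar> \<le> c"
    using assms unfolding bounded_measurable_def by blast
  have "\<lfloor>real (Suc N) * f x\<rfloor> \<in> {\<lfloor>real (Suc N) * - c\<rfloor>..\<lfloor>real (Suc N) * c\<rfloor>}" if "x \<in> X" for x
  proof -
    have "- c \<le> f x" "f x \<le> c" using c[OF that] by (auto simp: abs_le_iff)
    then show ?thesis
      unfolding atLeastAtMost_iff by (intro conjI floor_mono mult_left_mono) simp_all
  qed
  then have "level_values X f N \<subseteq> {\<lfloor>real (Suc N) * - c\<rfloor>..\<lfloor>real (Suc N) * c\<rfloor>}"
    unfolding level_values_def by blast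
  then show ?thesis by (rule finite_subset) simp
qed

lemma level_set_lower: "x \<in> level_set X f N k \<Longrightarrow> real_of_int k / real (Suc N) \<le> f x"
  by (auto simp: level_set_def field_simps)

lemma level_set_upper:
  "x \<in> level_set X f N k \<Longrightarrow> f x \<le> real_of_int k / real (Suc N) + inverse (real (Suc N))"
  by (auto simp: level_set_def floor_eq_iff field_simps)

context sigma_algebra
begin

lemma sets_Collect_less:
  fixes f :: "'a \<Rightarrow> real"
  assumes "\<And>c. {x\<in>\<Omega>. f x \<le> c} \<in> M"
  shows "{x\<in>\<Omega>. f x < c} \<in> M"
proof -
  have "{x\<in>\<Omega>. f x < c} = (\<Union>n. {x\<in>\<Omega>. f x \<le> c - inverse (real (Suc n))})"
  proof (intro antisym subsetI)
    fix x assume "x \<in> {x\<in>\<Omega>. f x < c}"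
    moreover obtain n where "inverse (real (Suc n)) < c - f x"
      using calculation reals_Archimedean[of "c - f x"] by auto
    ultimately show "x \<in> (\<Union>n. {x\<in>\<Omega>. f x \<le> c - inverse (real (Suc n))})"
      by (intro UN_I[of n]) auto
  next
    fix x assume "x \<in> (\<Union>n. {x\<in>\<Omega>. f x \<le> c - inverse (real (Suc n))})"
    then obtain n where "x \<in> \<Omega>" "f x \<le> c - inverse (real (Suc n))" by blast
    moreover have "0 < inverse (real (Suc n))" by simp
    ultimately have "f x < c" by linarith
    with \<open>x \<in> \<Omega>\<close> show "x \<in> {x\<in>\<Omega>. f x < c}" by simp
  qed
  also have "\<dots> \<in> M" using assms by (intro countable_UN') auto
  finally show ?thesis .
qed

lemma level_set_in_sets:
  assumes "bounded_measurable M \<Omega> f"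
  shows "level_set \<Omega> f N k \<in> M"
proof -
  have le: "\<And>c. {x\<in>\<Omega>. f x \<le> c} \<in> M"
    using assms unfolding bounded_measurable_def by blast
  have "level_set \<Omega> f N k =
      (\<Omega> - {x\<in>\<Omega>. f x < real_of_int k / real (Suc N)}) \<inter> {x\<in>\<Omega>. f x < (real_of_int k + 1) / real (Suc N)}"
    unfolding level_set_def by (auto simp: floor_eq_iff field_simps)
  then show ?thesis using sets_Collect_less[OF le] by auto
qed

lemma finite_partition_level_sets:
  assumes "bounded_measurable M \<Omega> f"
  shows "finite_partition M \<Omega> (level_values \<Omega> f N) (level_set \<Omega> f N)"
  using finite_level_values[OF assms] level_set_in_sets[OF assms]
  by (auto simp: finite_partition_def disjoint_family_on_def level_set_def level_values_def)

lemma level_sum_le: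
  assumes "\<nu> \<in> S_ba \<Omega> M" "bounded_measurable M \<Omega> f"
  shows "level_sum \<Omega> \<nu> f N \<le> level_sum \<Omega> \<nu> f K + inverse (real (Suc K))"
  unfolding level_sum_def
  by (rule partition_sum_le[OF assms(1) finite_partition_level_sets[OF assms(2)]
        finite_partition_level_sets[OF assms(2)] level_set_lower level_set_upper])

lemma level_sum_approx:
  assumes "\<nu> \<in> S_ba \<Omega> M" "bounded_measurable M \<Omega> f"
  shows "level_sum \<Omega> \<nu> f \<longlonglongrightarrow> fa_integral \<Omega> \<nu> f"
    and "\<bar>level_sum \<Omega> \<nu> f N - fa_integral \<Omega> \<nu> f\<bar> \<le> inverse (real (Suc N))"
proof -
  let ?S = "level_sum \<Omega> \<nu> f"
  have dist: "\<bar>?S n - ?S k\<bar> \<le> inverse (real (Suc n)) + inverse (real (Suc k))" for n k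
    using level_sum_le[OF assms, of n k] level_sum_le[OF assms, of k n]
      inverse_nonnegative_iff_nonnegative[of "real (Suc n)"]
      inverse_nonnegative_iff_nonnegative[of "real (Suc k)"]
    by (simp only: abs_le_iff) linarith
  have "Cauchy ?S"
  proof (rule CauchyI)
    fix e :: real assume "0 < e"
    then obtain K where K: "inverse (real (Suc K)) < e / 2"
      using reals_Archimedean[of "e / 2"] by auto
    have "norm (?S m - ?S n) < e" if "K \<le> m" "K \<le> n" for m n
    proof -
      have "inverse (real (Suc m)) \<le> inverse (real (Suc K))"
        "inverse (real (Suc n)) \<le> inverse (real (Suc K))"
        using that by (auto intro!: le_imp_inverse_le)
      then show ?thesis unfolding real_norm_def using dist[of m n] K by linarith
    qed
    then show "\<exists>M. \<forall>m\<ge>M. \<forall>n\<ge>M. norm (?S m - ?S n) < e" by blast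
  qed
  then show lim: "?S \<longlonglongrightarrow> fa_integral \<Omega> \<nu> f"
    by (simp add: Cauchy_convergent_iff convergent_LIMSEQ_iff fa_integral_eq_lim_level_sum)
  have "\<bar>?S N - ?S k\<bar> - inverse (real (Suc k)) \<le> inverse (real (Suc N))" for k
    using dist[of N k] by linarith
  moreover have "(\<lambda>k. \<bar>?S N - ?S k\<bar> - inverse (real (Suc k))) \<longlonglongrightarrow> \<bar>?S N - fa_integral \<Omega> \<nu> f\<bar> - 0"
    by (intro tendsto_intros lim LIMSEQ_inverse_real_of_nat)
  ultimately show "\<bar>?S N - fa_integral \<Omega> \<nu> f\<bar> \<le> inverse (real (Suc N))"
    using LIMSEQ_le_const2 by fastforce
qed

lemma partition_sum_le_fa_integral:
  assumes \<nu>: "\<nu> \<in> S_ba \<Omega> M" and f: "bounded_measurable M \<Omega> f"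
    and B: "finite_partition M \<Omega> K B" and lower: "\<And>k x. k \<in> K \<Longrightarrow> x \<in> B k \<Longrightarrow> a k \<le> f x"
  shows "(\<Sum>k\<in>K. a k * \<nu> (B k)) \<le> fa_integral \<Omega> \<nu> f"
proof (rule LIMSEQ_le_const)
  show "(\<lambda>N. level_sum \<Omega> \<nu> f N + inverse (real (Suc N))) \<longlonglongrightarrow> fa_integral \<Omega> \<nu> f"
    using tendsto_add[OF level_sum_approx(1)[OF \<nu> f] LIMSEQ_inverse_real_of_nat] by simp
  have "(\<Sum>k\<in>K. a k * \<nu> (B k)) \<le> level_sum \<Omega> \<nu> f N + inverse (real (Suc N))" for N
    unfolding level_sum_def
    by (rule partition_sum_le[OF \<nu> B finite_partition_level_sets[OF f] lower level_set_upper[of _ \<Omega> f N]])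
  then show "\<exists>N0. \<forall>N\<ge>N0. (\<Sum>k\<in>K. a k * \<nu> (B k)) \<le> level_sum \<Omega> \<nu> f N + inverse (real (Suc N))"
    by blast
qed

lemma fa_integral_le_partition_sum:
  assumes \<nu>: "\<nu> \<in> S_ba \<Omega> M" and f: "bounded_measurable M \<Omega> f"
    and B: "finite_partition M \<Omega> K B" and upper: "\<And>k x. k \<in> K \<Longrightarrow> x \<in> B k \<Longrightarrow> f x \<le> b k + \<delta>"
  shows "fa_integral \<Omega> \<nu> f \<le> (\<Sum>k\<in>K. b k * \<nu> (B k)) + \<delta>"
proof (rule LIMSEQ_le_const2[OF level_sum_approx(1)[OF \<nu> f]])
  have "level_sum \<Omega> \<nu> f N \<le> (\<Sum>k\<in>K. b k * \<nu> (B k)) + \<delta>" for N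
    unfolding level_sum_def
    by (rule partition_sum_le[OF \<nu> finite_partition_level_sets[OF f] B level_set_lower[of _ \<Omega> f N] upper])
  then show "\<exists>N0. \<forall>N\<ge>N0. level_sum \<Omega> \<nu> f N \<le> (\<Sum>k\<in>K. b k * \<nu> (B k)) + \<delta>"
    by blast
qed

lemma finite_partition_space: "finite_partition M \<Omega> {()} (\<lambda>_. \<Omega>)"
  by (simp add: finite_partition_def disjoint_family_on_def)

lemma fa_integral_ge_const:
  assumes "\<nu> \<in> S_ba \<Omega> M" "bounded_measurable M \<Omega> f" "\<And>x. x \<in> \<Omega> \<Longrightarrow> c \<le> f x"
  shows "c \<le> fa_integral \<Omega> \<nu> f"
  using partition_sum_le_fa_integral[OF assms(1,2) finite_partition_space, of "\<lambda>_. c"] assms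
  by (simp add: S_ba_space)

lemma fa_integral_le_const:
  assumes "\<nu> \<in> S_ba \<Omega> M" "bounded_measurable M \<Omega> f" "\<And>x. x \<in> \<Omega> \<Longrightarrow> f x \<le> c"
  shows "fa_integral \<Omega> \<nu> f \<le> c"
  using fa_integral_le_partition_sum[OF assms(1,2) finite_partition_space, of "\<lambda>_. c" 0] assms
  by (simp add: S_ba_space)

lemma fa_integral_eq_1:
  assumes \<nu>: "\<nu> \<in> S_ba \<Omega> M" and f: "bounded_measurable M \<Omega> f"
    and range: "\<And>x. x \<in> \<Omega> \<Longrightarrow> 0 \<le> f x \<and> f x \<le> 1"
    and D: "D \<in> M" "\<nu> D = 1" "\<And>x. x \<in> D \<Longrightarrow> f x = 1"
  shows "fa_integral \<Omega> \<nu> f = 1"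
proof -
  have "finite_partition M \<Omega> UNIV (\<lambda>b. if b then D else \<Omega> - D)"
    using D sets_into_space by (auto simp: finite_partition_def disjoint_family_on_def)
  moreover have "(if b then 1 else 0) \<le> f x" if "x \<in> (if b then D else \<Omega> - D)" for b x
    using that range D by (cases b) auto
  ultimately have "(\<Sum>b\<in>UNIV. (if b then 1 else 0) * \<nu> (if b then D else \<Omega> - D)) \<le> fa_integral \<Omega> \<nu> f"
    by (rule partition_sum_le_fa_integral[OF \<nu> f])
  then have "1 \<le> fa_integral \<Omega> \<nu> f"
    using D by (simp add: UNIV_bool)
  then show ?thesis
    using fa_integral_le_const[OF \<nu> f, of 1] range by fastforce
qed

lemma fa_integral_add:
  assumes \<nu>: "\<nu> \<in> S_ba \<Omega> M" and f: "bounded_measurable M \<Omega> f" and g: "bounded_measurable M \<Omega> g"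
    and h: "bounded_measurable M \<Omega> h" and hfg: "\<And>x. x \<in> \<Omega> \<Longrightarrow> h x = f x + g x"
  shows "fa_integral \<Omega> \<nu> h = fa_integral \<Omega> \<nu> f + fa_integral \<Omega> \<nu> g"
proof -
  let ?r = "\<lambda>N k. real_of_int k / real (Suc N)"
  let ?B = "\<lambda>N (k, l). level_set \<Omega> f N k \<inter> level_set \<Omega> g N l"
  let ?s = "\<lambda>N (k, l). ?r N k + ?r N l"
  have B: "finite_partition M \<Omega> (level_values \<Omega> f N \<times> level_values \<Omega> g N) (?B N)" for N
    by (intro finite_partition_Times finite_partition_level_sets f g)
  have sums: "(\<Sum>z\<in>level_values \<Omega> f N \<times> level_values \<Omega> g N. ?s N z * \<nu> (?B N z)) =
      level_sum \<Omega> \<nu> f N + level_sum \<Omega> \<nu> g N" for N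
    using S_ba_partition_Times_sum[OF \<nu> finite_partition_level_sets[OF f, of N]
        finite_partition_level_sets[OF g, of N], of "?r N" "?r N"]
    by (simp only: level_sum_def case_prod_unfold)
  have on_B: "x \<in> ?B N z \<Longrightarrow> ?s N z \<le> h x \<and> h x \<le> ?s N z + 2 * inverse (real (Suc N))" for N z x
    using level_set_lower[of x \<Omega> f N] level_set_upper[of x \<Omega> f N]
      level_set_lower[of x \<Omega> g N] level_set_upper[of x \<Omega> g N] hfg[of x]
    by (cases z) (auto simp: level_set_def)
  have upper: "fa_integral \<Omega> \<nu> h \<le> level_sum \<Omega> \<nu> f N + level_sum \<Omega> \<nu> g N + 2 * inverse (real (Suc N))"
    and lower: "level_sum \<Omega> \<nu> f N + level_sum \<Omega> \<nu> g N \<le> fa_integral \<Omega> \<nu> h" for N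
    using fa_integral_le_partition_sum[OF \<nu> h B[of N], of "?s N"]
      partition_sum_le_fa_integral[OF \<nu> h B[of N], of "?s N"] on_B[of _ N]
    by (simp_all only: sums)
  have sum_lim: "(\<lambda>N. level_sum \<Omega> \<nu> f N + level_sum \<Omega> \<nu> g N) \<longlonglongrightarrow> fa_integral \<Omega> \<nu> f + fa_integral \<Omega> \<nu> g"
    using level_sum_approx(1)[OF \<nu> f] level_sum_approx(1)[OF \<nu> g] by (rule tendsto_add)
  have "fa_integral \<Omega> \<nu> h \<le> fa_integral \<Omega> \<nu> f + fa_integral \<Omega> \<nu> g"
  proof (rule LIMSEQ_le_const)
    show "(\<lambda>N. level_sum \<Omega> \<nu> f N + level_sum \<Omega> \<nu> g N + 2 * inverse (real (Suc N)))
        \<longlonglongrightarrow> fa_integral \<Omega> \<nu> f + fa_integral \<Omega> \<nu> g"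
      using tendsto_add[OF sum_lim tendsto_mult_left[OF LIMSEQ_inverse_real_of_nat, of 2]] by simp
  qed (use upper in blast)
  moreover have "fa_integral \<Omega> \<nu> f + fa_integral \<Omega> \<nu> g \<le> fa_integral \<Omega> \<nu> h"
    by (rule LIMSEQ_le_const2[OF sum_lim]) (use lower in blast)
  ultimately show ?thesis by linarith
qed

lemma fa_integral_sum_measures:
  assumes "\<And>i. i \<in> I \<Longrightarrow> \<nu> i \<in> S_ba \<Omega> M" "bounded_measurable M \<Omega> f"
  shows "fa_integral \<Omega> (\<lambda>E. \<Sum>i\<in>I. c i * \<nu> i E) f = (\<Sum>i\<in>I. c i * fa_integral \<Omega> (\<nu> i) f)"
proof -
  have "level_sum \<Omega> (\<lambda>E. \<Sum>i\<in>I. c i * \<nu> i E) f N = (\<Sum>i\<in>I. c i * level_sum \<Omega> (\<nu> i) f N)" for N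
    unfolding level_sum_def by (simp add: sum_distrib_left mult_ac) (rule sum.swap)
  then have "level_sum \<Omega> (\<lambda>E. \<Sum>i\<in>I. c i * \<nu> i E) f = (\<lambda>N. \<Sum>i\<in>I. c i * level_sum \<Omega> (\<nu> i) f N)"
    by (rule ext)
  moreover have "(\<lambda>N. \<Sum>i\<in>I. c i * level_sum \<Omega> (\<nu> i) f N) \<longlonglongrightarrow> (\<Sum>i\<in>I. c i * fa_integral \<Omega> (\<nu> i) f)"
    using assms by (intro tendsto_sum tendsto_mult_left level_sum_approx(1))
  ultimately show ?thesis
    by (simp add: fa_integral_eq_lim_level_sum limI)
qed

lemma fa_integral_cesaro_mean:
  assumes "\<And>k. \<nu> k \<in> S_ba \<Omega> M" "bounded_measurable M \<Omega> f"
  shows "fa_integral \<Omega> (\<lambda>E. cesaro_mean (\<lambda>k. \<nu> k E) n) f = cesaro_mean (\<lambda>k. fa_integral \<Omega> (\<nu> k) f) n"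
proof -
  have mean: "cesaro_mean g n = (\<Sum>k\<le>n. inverse (real (Suc n)) * g k)" for g
    by (simp add: cesaro_mean_def sum_distrib_left divide_inverse_commute)
  show ?thesis
    unfolding mean by (rule fa_integral_sum_measures[where \<nu> = \<nu>, OF assms])
qed

lemma fa_integral_tendsto:
  fixes \<nu> :: "'b \<Rightarrow> 'a set \<Rightarrow> real"
  assumes \<nu>: "\<And>n. \<nu> n \<in> S_ba \<Omega> M" and \<mu>: "\<mu> \<in> S_ba \<Omega> M" and f: "bounded_measurable M \<Omega> f"
    and lim: "\<And>E. E \<in> M \<Longrightarrow> ((\<lambda>n. \<nu> n E) \<longlongrightarrow> \<mu> E) F"
  shows "((\<lambda>n. fa_integral \<Omega> (\<nu> n) f) \<longlongrightarrow> fa_integral \<Omega> \<mu> f) F"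
proof (rule tendstoI)
  fix e :: real assume "0 < e"
  then obtain N where N: "inverse (real (Suc N)) < e / 3"
    using reals_Archimedean[of "e / 3"] by auto
  have "((\<lambda>n. level_sum \<Omega> (\<nu> n) f N) \<longlongrightarrow> level_sum \<Omega> \<mu> f N) F"
    unfolding level_sum_def
    by (intro tendsto_sum tendsto_mult_left lim level_set_in_sets f)
  then have "\<forall>\<^sub>F n in F. dist (level_sum \<Omega> (\<nu> n) f N) (level_sum \<Omega> \<mu> f N) < e / 3"
    using \<open>0 < e\<close> by (intro tendstoD) simp_all
  then show "\<forall>\<^sub>F n in F. dist (fa_integral \<Omega> (\<nu> n) f) (fa_integral \<Omega> \<mu> f) < e"
  proof (rule eventually_mono)
    fix n
    assume "dist (level_sum \<Omega> (\<nu> n) f N) (level_sum \<Omega> \<mu> f N) < e / 3"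
    then show "dist (fa_integral \<Omega> (\<nu> n) f) (fa_integral \<Omega> \<mu> f) < e"
      using level_sum_approx(2)[OF \<nu> f, of n N] level_sum_approx(2)[OF \<mu> f, of N] N
      unfolding dist_real_def by arith
  qed
qed

end

section \<open>Cycles of the Markov operator\<close>

lemma singular_cycle_measuresI:
  assumes "0 < m" "\<And>i. i < m \<Longrightarrow> \<mu> i \<in> S_ba X \<Sigma>"
    and "\<And>i E. i < m \<Longrightarrow> E \<in> \<Sigma> \<Longrightarrow> markov_op X p (\<mu> i) E = \<mu> (Suc i mod m) E"
    and "\<And>i. i < m \<Longrightarrow> D i \<in> \<Sigma>" "\<And>i j. i < m \<Longrightarrow> j < m \<Longrightarrow> i \<noteq> j \<Longrightarrow> D i \<inter> D j = {}"
    and \<mu>D: "\<And>i j. i < m \<Longrightarrow> j < m \<Longrightarrow> \<mu> i (D j) = (if i = j then 1 else 0)"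
  shows "singular_cycle_measures X \<Sigma> p m \<mu>"
  unfolding singular_cycle_measures_def cycle_measures_def singular_meas_def meas_eq_def
proof (intro conjI allI impI ballI)
  fix i j assume "i < m" "j < m" "i \<noteq> j"
  then show "\<not> (\<forall>E\<in>\<Sigma>. \<mu> i E = \<mu> j E)"
    using assms(4) \<mu>D[of i i] \<mu>D[of j i] by force
  show "\<exists>A\<in>\<Sigma>. \<exists>B\<in>\<Sigma>. A \<inter> B = {} \<and> \<mu> i A = \<mu> i X \<and> \<mu> j B = \<mu> j X"
    using assms(2,4,5) \<mu>D[of i i] \<mu>D[of j j] \<open>i < m\<close> \<open>j < m\<close> \<open>i \<noteq> j\<close>
    by (metis S_ba_space)
qed (use assms in \<open>auto simp: S_ba_def\<close>)

context
  fixes X :: "'a set" and \<Sigma> :: "'a set set" and p :: "'a \<Rightarrow> 'a set \<Rightarrow> real"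
  assumes \<Sigma>: "sigma_algebra X \<Sigma>" and p: "transition_function X \<Sigma> p"
begin

interpretation sigma_algebra X \<Sigma> by (fact \<Sigma>)

lemma transition_function_sums:
  "x \<in> X \<Longrightarrow> range F \<subseteq> \<Sigma> \<Longrightarrow> disjoint_family F \<Longrightarrow> (\<lambda>n. p x (F n)) sums p x (\<Union>n. F n)"
  using p unfolding transition_function_def by blast

lemma transition_function_empty:
  assumes "x \<in> X"
  shows "p x {} = 0"
proof -
  have "(\<lambda>n. p x {}) sums p x {}"
    using transition_function_sums[OF assms, of "\<lambda>_. {}"] by (simp add: disjoint_family_on_def)
  then show ?thesis
    using LIMSEQ_unique summable_LIMSEQ_zero sums_summable by blast
qed

lemma transition_function_additive:
  assumes "x \<in> X" "A \<in> \<Sigma>" "B \<in> \<Sigma>" "A \<inter> B = {}"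
  shows "p x (A \<union> B) = p x A + p x B"
proof -
  define F where "F n = (if n = 0 then A else if n = 1 then B else {})" for n :: nat
  have "(\<Union>n. F n) = A \<union> B"
    by (auto simp: F_def split: if_splits intro: exI[of _ "0::nat"] exI[of _ "1::nat"])
  moreover have "range F \<subseteq> \<Sigma>" "disjoint_family F"
    using assms by (auto simp: F_def disjoint_family_on_def)
  ultimately have "(\<lambda>n. p x (F n)) sums p x (A \<union> B)"
    using transition_function_sums[OF assms(1)] by metis
  moreover have "(\<lambda>n. p x (F n)) sums (\<Sum>n\<in>{0, 1}. p x (F n))"
    by (rule sums_finite) (auto simp: F_def transition_function_empty[OF assms(1)])
  ultimately show ?thesis
    by (simp add: F_def sums_unique2)
qed

lemma transition_function_bounded_measurable:
  assumes "E \<in> \<Sigma>"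
  shows "bounded_measurable \<Sigma> X (\<lambda>x. p x E)"
  using p assms unfolding transition_function_def bounded_measurable_def
  by (auto intro!: exI[of _ 1])

lemma markov_op_S_ba:
  assumes \<nu>: "\<nu> \<in> S_ba X \<Sigma>"
  shows "markov_op X p \<nu> \<in> S_ba X \<Sigma>"
proof (rule S_baI[OF algebra_axioms])
  show "markov_op X p \<nu> (A \<union> B) = markov_op X p \<nu> A + markov_op X p \<nu> B"
    if "A \<in> \<Sigma>" "B \<in> \<Sigma>" "A \<inter> B = {}" for A B
    unfolding markov_op_def using that
    by (intro fa_integral_add[OF \<nu>] transition_function_bounded_measurable transition_function_additive)
      auto
  show "0 \<le> markov_op X p \<nu> A" if "A \<in> \<Sigma>" for A
    unfolding markov_op_def using p that
    by (intro fa_integral_ge_const[OF \<nu>] transition_function_bounded_measurable)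
      (auto simp: transition_function_def)
  show "markov_op X p \<nu> X = 1"
    unfolding markov_op_def using p
    by (intro fa_integral_eq_1[OF \<nu> transition_function_bounded_measurable[OF top] _ top S_ba_space[OF \<nu>]])
      (auto simp: transition_function_def)
qed

lemma markov_op_eq_1:
  assumes "\<nu> \<in> S_ba X \<Sigma>" "D \<in> \<Sigma>" "\<nu> D = 1" "E \<in> \<Sigma>" "\<And>x. x \<in> D \<Longrightarrow> p x E = 1"
  shows "markov_op X p \<nu> E = 1"
  unfolding markov_op_def using p assms
  by (intro fa_integral_eq_1[OF assms(1) transition_function_bounded_measurable])
    (auto simp: transition_function_def)

lemma markov_op_cesaro_mean:
  assumes "\<And>k. \<nu> k \<in> S_ba X \<Sigma>" "E \<in> \<Sigma>"
  shows "markov_op X p (\<lambda>E. cesaro_mean (\<lambda>k. \<nu> k E) n) E = cesaro_mean (\<lambda>k. markov_op X p (\<nu> k) E) n"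
  unfolding markov_op_def
  by (rule fa_integral_cesaro_mean[where \<nu> = \<nu>, OF assms(1) transition_function_bounded_measurable[OF assms(2)]])

lemma markov_op_tendsto:
  fixes \<nu> :: "'b \<Rightarrow> 'a set \<Rightarrow> real"
  assumes "\<And>n. \<nu> n \<in> S_ba X \<Sigma>" "\<mu> \<in> S_ba X \<Sigma>" "\<And>E. E \<in> \<Sigma> \<Longrightarrow> ((\<lambda>n. \<nu> n E) \<longlongrightarrow> \<mu> E) F" "E \<in> \<Sigma>"
  shows "((\<lambda>n. markov_op X p (\<nu> n) E) \<longlongrightarrow> markov_op X p \<mu> E) F"
  unfolding markov_op_def
  by (rule fa_integral_tendsto[where \<nu> = \<nu>, OF assms(1,2) transition_function_bounded_measurable[OF assms(4)] assms(3)])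

lemma S_ba_markov_orbit: "\<nu> \<in> S_ba X \<Sigma> \<Longrightarrow> (markov_op X p ^^ j) \<nu> \<in> S_ba X \<Sigma>"
  by (induction j) (simp_all add: markov_op_S_ba)

lemma markov_op_tendsto_cesaro_orbit:
  assumes \<nu>: "\<nu> \<in> S_ba X \<Sigma>" and \<mu>: "\<mu> \<in> S_ba X \<Sigma>" and "E \<in> \<Sigma>"
    and lim: "\<And>E. E \<in> \<Sigma> \<Longrightarrow> (cesaro_mean (\<lambda>k. (markov_op X p ^^ (k * m + i)) \<nu> E) \<longlongrightarrow> \<mu> E) F"
  shows "(cesaro_mean (\<lambda>k. (markov_op X p ^^ (k * m + Suc i)) \<nu> E) \<longlongrightarrow> markov_op X p \<mu> E) F"
proof -
  let ?mean = "\<lambda>n E. cesaro_mean (\<lambda>k. (markov_op X p ^^ (k * m + i)) \<nu> E) n"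
  have orbit: "(markov_op X p ^^ (k * m + i)) \<nu> \<in> S_ba X \<Sigma>" for k
    using S_ba_markov_orbit[OF \<nu>] .
  have "markov_op X p (?mean n) E = cesaro_mean (\<lambda>k. (markov_op X p ^^ (k * m + Suc i)) \<nu> E) n" for n
    using markov_op_cesaro_mean[where \<nu> = "\<lambda>k. (markov_op X p ^^ (k * m + i)) \<nu>", OF orbit \<open>E \<in> \<Sigma>\<close>]
    by simp
  moreover have "((\<lambda>n. markov_op X p (?mean n) E) \<longlongrightarrow> markov_op X p \<mu> E) F"
    using markov_op_tendsto[OF S_ba_cesaro_mean[OF orbit] \<mu> lim \<open>E \<in> \<Sigma>\<close>] .
  ultimately show ?thesis
    by (simp add: fun_eq_iff)
qed

lemma exists_markov_cycle_from_orbit: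
  assumes \<nu>: "\<nu> \<in> S_ba X \<Sigma>" and "0 < m"
  shows "\<exists>\<mu>. \<forall>i<m. \<mu> i \<in> S_ba X \<Sigma> \<and>
    (\<forall>E\<in>\<Sigma>. markov_op X p (\<mu> i) E = \<mu> (Suc i mod m) E) \<and>
    (\<forall>E\<in>\<Sigma>. \<forall>c. (\<forall>k. (markov_op X p ^^ (k * m + i)) \<nu> E = c) \<longrightarrow> \<mu> i E = c)"
proof -
  define orbit where "orbit j = (markov_op X p ^^ j) \<nu>" for j
  define mean where "mean i n E = cesaro_mean (\<lambda>k. orbit (k * m + i) E) n" for i n E
  have orbit: "orbit j \<in> S_ba X \<Sigma>" for j
    unfolding orbit_def using S_ba_markov_orbit[OF \<nu>] .
  have "mean i n \<in> S_ba X \<Sigma>" for i n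
    unfolding mean_def using S_ba_cesaro_mean[OF orbit] .
  then obtain U \<mu> where "U \<le> sequentially" "U \<noteq> bot" and \<mu>: "\<And>i. \<mu> i \<in> S_ba X \<Sigma>"
    and lim: "\<And>i E. E \<in> \<Sigma> \<Longrightarrow> ((\<lambda>n. mean i n E) \<longlongrightarrow> \<mu> i E) U"
    using exists_ultrafilter_limits_S_ba[where \<nu> = mean] by metis
  have "\<mu> i E = c" if "E \<in> \<Sigma>" "\<And>k. orbit (k * m + i) E = c" for i E c
    using tendsto_unique[OF \<open>U \<noteq> bot\<close> lim[OF that(1)]] that(2)
    by (simp add: mean_def cesaro_mean_const)
  moreover have "markov_op X p (\<mu> i) E = \<mu> (Suc i mod m) E" if "i < m" "E \<in> \<Sigma>" for i E
  proof -
    let ?next = "\<lambda>n. cesaro_mean (\<lambda>k. orbit (k * m + Suc i) E) n"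
    have "(?next \<longlongrightarrow> markov_op X p (\<mu> i) E) U"
      using markov_op_tendsto_cesaro_orbit[OF \<nu> \<mu> \<open>E \<in> \<Sigma>\<close> lim[unfolded mean_def orbit_def]]
      by (simp add: orbit_def)
    moreover have "(?next \<longlongrightarrow> \<mu> (Suc i mod m) E) U"
    proof (cases "Suc i < m")
      case True
      then show ?thesis
        using lim[OF \<open>E \<in> \<Sigma>\<close>, of "Suc i"] by (simp add: mean_def)
    next
      case False
      with \<open>i < m\<close> have "Suc i = m" by simp
      have "\<bar>orbit (k * m) E\<bar> \<le> 1" for k
        using S_ba_nonneg[OF orbit \<open>E \<in> \<Sigma>\<close>] S_ba_le_1[OF orbit \<open>E \<in> \<Sigma>\<close>] by simp
      moreover have "(cesaro_mean (\<lambda>k. orbit (k * m) E) \<longlongrightarrow> \<mu> 0 E) U"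
        using lim[OF \<open>E \<in> \<Sigma>\<close>, of 0] by (simp add: mean_def)
      ultimately have "((\<lambda>n. cesaro_mean (\<lambda>k. orbit (Suc k * m) E) n) \<longlongrightarrow> \<mu> 0 E) U"
        using tendsto_cesaro_mean_shift[where g = "\<lambda>k. orbit (k * m) E"] \<open>U \<le> sequentially\<close> by blast
      then show ?thesis
        using \<open>Suc i = m\<close> by (simp add: add.commute)
    qed
    ultimately show ?thesis
      using tendsto_unique[OF \<open>U \<noteq> bot\<close>] by blast
  qed
  ultimately show ?thesis
    using \<mu> unfolding orbit_def by blast
qed

lemma markov_orbit_dirac_cycle_sets:
  assumes D: "singular_cycle_sets \<Sigma> p m D" and "x \<in> D 0" "l < m"
  shows "(markov_op X p ^^ j) (\<lambda>E. if x \<in> E then 1 else 0) (D l) = (if l = j mod m then 1 else 0)"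
proof -
  let ?\<nu> = "\<lambda>j. (markov_op X p ^^ j) (\<lambda>E. if x \<in> E then 1 else 0)"
  have "0 < m" and sets: "\<And>i. i < m \<Longrightarrow> D i \<in> \<Sigma>"
    and step: "\<And>i y. i < m \<Longrightarrow> y \<in> D i \<Longrightarrow> p y (D (Suc i mod m)) = 1"
    and disj: "\<And>i j. i < m \<Longrightarrow> j < m \<Longrightarrow> i \<noteq> j \<Longrightarrow> D i \<inter> D j = {}"
    using D by (auto simp: singular_cycle_sets_def cycle_sets_def)
  have "x \<in> X"
    using sets[OF \<open>0 < m\<close>] \<open>x \<in> D 0\<close> sets_into_space by blast
  then have \<nu>: "?\<nu> j \<in> S_ba X \<Sigma>" for j
    by (intro S_ba_markov_orbit S_ba_dirac)
  have one: "?\<nu> j (D (j mod m)) = 1" for j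
  proof (induction j)
    case 0
    then show ?case using \<open>x \<in> D 0\<close> by simp
  next
    case (Suc j)
    have "Suc j mod m = Suc (j mod m) mod m"
      by (simp add: mod_Suc_eq)
    then show ?case
      using markov_op_eq_1[OF \<nu> sets Suc.IH sets step] \<open>0 < m\<close> by simp
  qed
  have "j mod m < m"
    using \<open>0 < m\<close> by simp
  then show ?thesis
    using one S_ba_disjoint_eq_0[OF \<nu> sets[of "j mod m"] sets[OF \<open>l < m\<close>] disj[of "j mod m" l]] \<open>l < m\<close>
    by auto
qed

end

theorem theorem4p5:
  fixes X :: "'a set" and \<Sigma> :: "'a set set" and p :: "'a \<Rightarrow> 'a set \<Rightarrow> real"
    and m :: nat and D :: "nat \<Rightarrow> 'a set"
  assumes "standing_space X \<Sigma>"
    and "transition_function X \<Sigma> p"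
    and "singular_cycle_sets \<Sigma> p m D"
  shows "\<exists>\<mu> :: nat \<Rightarrow> 'a set \<Rightarrow> real.
           singular_cycle_measures X \<Sigma> p m \<mu> \<and>
           (\<forall>i<m. \<mu> i \<in> S_ba X \<Sigma>) \<and>
           (\<forall>i<m. \<forall>j<m. \<mu> i (D j) = (if i = j then 1 else 0))"
proof -
  have \<Sigma>: "sigma_algebra X \<Sigma>"
    using assms(1) by (simp add: standing_space_def)
  interpret sigma_algebra X \<Sigma> by (fact \<Sigma>)
  have "0 < m" and D: "\<And>i. i < m \<Longrightarrow> D i \<in> \<Sigma> \<and> D i \<noteq> {}"
    and disj: "\<And>i j. i < m \<Longrightarrow> j < m \<Longrightarrow> i \<noteq> j \<Longrightarrow> D i \<inter> D j = {}"
    using assms(3) by (auto simp: singular_cycle_sets_def cycle_sets_def)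
  then obtain x where "x \<in> D 0" by blast
  then have "x \<in> X"
    using D[OF \<open>0 < m\<close>] sets_into_space by blast
  obtain \<mu> where \<mu>: "\<And>i. i < m \<Longrightarrow> \<mu> i \<in> S_ba X \<Sigma>"
    and cycle: "\<And>i E. i < m \<Longrightarrow> E \<in> \<Sigma> \<Longrightarrow> markov_op X p (\<mu> i) E = \<mu> (Suc i mod m) E"
    and orbit: "\<And>i E c. i < m \<Longrightarrow> E \<in> \<Sigma> \<Longrightarrow>
      (\<forall>k. (markov_op X p ^^ (k * m + i)) (\<lambda>E. if x \<in> E then 1 else 0) E = c) \<Longrightarrow> \<mu> i E = c"
    using exists_markov_cycle_from_orbit[OF \<Sigma> assms(2) S_ba_dirac[OF \<open>x \<in> X\<close>] \<open>0 < m\<close>] by metis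
  have \<mu>D: "\<mu> i (D j) = (if i = j then 1 else 0)" if "i < m" "j < m" for i j
    using orbit[OF \<open>i < m\<close> conjunct1[OF D[OF \<open>j < m\<close>]]] that
      markov_orbit_dirac_cycle_sets[OF \<Sigma> assms(2,3) \<open>x \<in> D 0\<close> \<open>j < m\<close>] by auto
  have "singular_cycle_measures X \<Sigma> p m \<mu>"
    using \<open>0 < m\<close> \<mu> cycle D disj \<mu>D by (intro singular_cycle_measuresI[where D = D]) auto
  with \<mu> \<mu>D show ?thesis by blast
qed

end
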